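(* Let $d\ge2$, $\mathcal{X}=\{0,\dots,d-1\}$, and let $P_{XABC}$ be a probability distribution on $\mathcal{X}\times\{0,1\}^3$. Define $\omega_{\mathrm{c}}=\max_{f,g,h}\sum_{x,a,b,c}P_{XABC}(x,a,b,c)\,\delta[f(a)=g(b)=h(c)=x]$, maximized over functions $f,g,h\colon\{0,1\}\to\mathcal{X}$. Then $$\omega_{\mathrm{c}}=\max_{s,t\in\mathcal{X},\,s\ne t}\max\left\{\begin{matrix}P_X(s),\\ P_{XABC}(s,0,0,0)+P_{XABC}(t,1,1,1),\\ P_{XABC}(s,1,0,0)+P_{XABC}(t,0,1,1),\\ P_{XABC}(s,0,1,0)+P_{XABC}(t,1,0,1),\\ P_{XABC}(s,0,0,1)+P_{XABC}(t,1,1,0)\end{matrix}\right\}.$$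
   Context: $\delta$ is the indicator function; $P_X$ is the marginal of $P_{XABC}$ on $\mathcal{X}$. $\omega_{\mathrm{c}}$ is the optimal classical winning probability of the three-player LSSD game in which a referee samples $(x,a,b,c)\sim P_{XABC}$, sends $a,b,c$ to three non-communicating players, who win iff all three output $x$. *)

theory Defs
  imports "HOL-Analysis.Analysis"
begin

text \<open>Bits in {0,1} are encoded as bool (False = 0, True = 1).
 A distribution P_XABC on {0..d-1} x {0,1}^3 is a function
 P :: nat => bool => bool => bool => real.\<close>

definition is_distr :: "nat \<Rightarrow> (nat \<Rightarrow> bool \<Rightarrow> bool \<Rightarrow> bool \<Rightarrow> real) \<Rightarrow> bool" where
  "is_distr d P \<longleftrightarrow>
     (\<forall>x a b c. 0 \<le> P x a b c) \<and>
     (\<forall>x a b c. x \<ge> d \<longrightarrow> P x a b c = 0) \<and>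
     (\<Sum>x<d. \<Sum>a\<in>UNIV. \<Sum>b\<in>UNIV. \<Sum>c\<in>UNIV. P x a b c) = 1"

definition marg_X :: "(nat \<Rightarrow> bool \<Rightarrow> bool \<Rightarrow> bool \<Rightarrow> real) \<Rightarrow> nat \<Rightarrow> real" where
  "marg_X P x = (\<Sum>a\<in>UNIV. \<Sum>b\<in>UNIV. \<Sum>c\<in>UNIV. P x a b c)"

definition win_prob :: "nat \<Rightarrow> (nat \<Rightarrow> bool \<Rightarrow> bool \<Rightarrow> bool \<Rightarrow> real)
    \<Rightarrow> (bool \<Rightarrow> nat) \<Rightarrow> (bool \<Rightarrow> nat) \<Rightarrow> (bool \<Rightarrow> nat) \<Rightarrow> real" where
  "win_prob d P f g h = (\<Sum>x<d. \<Sum>a\<in>UNIV. \<Sum>b\<in>UNIV. \<Sum>c\<in>UNIV.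
      P x a b c * (if f a = x \<and> g b = x \<and> h c = x then 1 else 0))"

definition strat_funs :: "nat \<Rightarrow> (bool \<Rightarrow> nat) set" where
  "strat_funs d = {f. \<forall>a. f a < d}"

definition omega_c :: "nat \<Rightarrow> (nat \<Rightarrow> bool \<Rightarrow> bool \<Rightarrow> bool \<Rightarrow> real) \<Rightarrow> real" where
  "omega_c d P = Max {win_prob d P f g h | f g h.
      f \<in> strat_funs d \<and> g \<in> strat_funs d \<and> h \<in> strat_funs d}"

end

theory Submission
  imports Defs
begin

text \<open>A deterministic strategy \<open>(f, g, h)\<close> wins exactly on the inputs \<open>(a, b, c)\<close> with
  \<open>f a = g b = h c\<close>, and then the referee's \<open>x\<close> must be this common value. If one player's
  function is constant, every win happens at the same \<open>x = s\<close>, so the winning probability is at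
  most \<open>P\<^sub>X(s)\<close>. Otherwise all three functions are injective on \<open>{0,1}\<close>, so at most
  one input wins for each \<open>a\<close>, and two winning inputs are necessarily antipodal,
  \<open>(a, b, c)\<close> and \<open>(\<not>a, \<not>b, \<not>c)\<close>; this bounds the winning probability by one of the pair
  sums. Conversely, constant strategies attain \<open>P\<^sub>X(s)\<close> and the strategies answering
  \<open>s\<close> on \<open>(a, b, c)\<close> and \<open>t\<close> otherwise attain each pair sum.\<close>

lemma Max_eq_if_dominated_both_ways:
  fixes A B :: "'a::linorder set"
  assumes "finite A" "finite B" "A \<noteq> {}" "B \<noteq> {}"
    and "\<forall>x\<in>A. \<exists>y\<in>B. x \<le> y" and "\<forall>y\<in>B. \<exists>x\<in>A. y \<le> x"
  shows "Max A = Max B"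
proof (rule antisym)
  obtain y where "y \<in> B" "Max A \<le> y" using assms(5) Max_in[OF assms(1,3)] by blast
  then show "Max A \<le> Max B" using assms(2) by (meson Max_ge order_trans)
next
  obtain x where "x \<in> A" "Max B \<le> x" using assms(6) Max_in[OF assms(2,4)] by blast
  then show "Max B \<le> Max A" using assms(1) by (meson Max_ge order_trans)
qed

lemma sum_UNIV_triples: "(\<Sum>a\<in>UNIV. \<Sum>b\<in>UNIV. \<Sum>c\<in>UNIV. F a b c) = (\<Sum>(a, b, c)\<in>UNIV. F a b c)"
  by (simp add: sum.cartesian_product)

definition winning_inputs :: "(bool \<Rightarrow> nat) \<Rightarrow> (bool \<Rightarrow> nat) \<Rightarrow> (bool \<Rightarrow> nat) \<Rightarrow> (bool \<times> bool \<times> bool) set" where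
  "winning_inputs f g h = {(a, b, c). f a = g b \<and> g b = h c}"

lemma marg_X_eq_sum: "marg_X P s = (\<Sum>(a, b, c)\<in>UNIV. P s a b c)"
  unfolding marg_X_def by (rule sum_UNIV_triples)

lemma win_prob_eq_sum_winning_inputs:
  assumes "\<forall>a. f a < d"
  shows "win_prob d P f g h = (\<Sum>(a, b, c)\<in>winning_inputs f g h. P (f a) a b c)"
proof -
  have "win_prob d P f g h =
      (\<Sum>(a, b, c)\<in>UNIV. \<Sum>x<d. P x a b c * (if f a = x \<and> g b = x \<and> h c = x then 1 else 0))"
    unfolding win_prob_def sum_UNIV_triples by (subst sum.swap) (simp add: case_prod_beta)
  also have "\<dots> = (\<Sum>(a, b, c)\<in>UNIV. if (a, b, c) \<in> winning_inputs f g h then P (f a) a b c else 0)"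
  proof (intro sum.cong refl, clarify)
    fix a b c
    have "(\<Sum>x<d. P x a b c * (if f a = x \<and> g b = x \<and> h c = x then 1 else 0)) =
        (\<Sum>x<d. if x = f a then (if (a, b, c) \<in> winning_inputs f g h then P (f a) a b c else 0) else 0)"
      by (intro sum.cong) (auto simp: winning_inputs_def)
    then show "(\<Sum>x<d. P x a b c * (if f a = x \<and> g b = x \<and> h c = x then 1 else 0)) =
        (if (a, b, c) \<in> winning_inputs f g h then P (f a) a b c else 0)"
      using assms by simp
  qed
  also have "\<dots> = (\<Sum>(a, b, c)\<in>winning_inputs f g h. P (f a) a b c)"
    by (simp add: sum.If_cases case_prod_beta)
  finally show ?thesis .
qed

lemma win_prob_le_marg_X:
  assumes nonneg: "\<forall>x a b c. 0 \<le> P x a b c" and "\<forall>a. f a < d"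
    and wins_at_s: "\<forall>(a, b, c)\<in>winning_inputs f g h. f a = s"
  shows "win_prob d P f g h \<le> marg_X P s"
proof -
  have "win_prob d P f g h = (\<Sum>(a, b, c)\<in>winning_inputs f g h. P (f a) a b c)"
    using assms(2) by (rule win_prob_eq_sum_winning_inputs)
  also have "\<dots> = (\<Sum>(a, b, c)\<in>winning_inputs f g h. P s a b c)"
    using wins_at_s by (intro sum.cong) auto
  also have "\<dots> \<le> (\<Sum>(a, b, c)\<in>UNIV. P s a b c)"
    using nonneg by (intro sum_mono2) auto
  finally show ?thesis by (simp add: marg_X_eq_sum)
qed

lemma winning_inputs_single_value:
  assumes "f False = f True \<or> g False = g True \<or> h False = h True"
  shows "\<exists>s\<in>{f False, g False, h False}. \<forall>(a, b, c)\<in>winning_inputs f g h. f a = s"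
  using assms
proof (elim disjE)
  assume "f False = f True"
  then have "f a = f False" if "(a, b, c) \<in> winning_inputs f g h" for a b c
    by (cases a) simp_all
  then show ?thesis by blast
next
  assume "g False = g True"
  then have "f a = g False" if "(a, b, c) \<in> winning_inputs f g h" for a b c
    using that by (cases b) (simp_all add: winning_inputs_def)
  then show ?thesis by blast
next
  assume "h False = h True"
  then have "f a = h False" if "(a, b, c) \<in> winning_inputs f g h" for a b c
    using that by (cases c) (simp_all add: winning_inputs_def)
  then show ?thesis by blast
qed

lemma winning_inputs_subset_antipodal:
  assumes "f False \<noteq> f True" "g False \<noteq> g True" "h False \<noteq> h True"
  shows "\<exists>b c. winning_inputs f g h \<subseteq> {(False, b, c), (True, \<not> b, \<not> c)}"
proof -
  \<comment> \<open>\<open>b\<close> is chosen with \<open>g b = f False\<close> and \<open>g (\<not> b) = f True\<close> whenever such inputs exist;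
    injectivity of \<open>g\<close> makes the two requirements compatible.\<close>
  define b where "b \<longleftrightarrow> g True = f False \<or> g False = f True"
  define c where "c \<longleftrightarrow> h True = f False \<or> h False = f True"
  have "winning_inputs f g h \<subseteq> {(False, b, c), (True, \<not> b, \<not> c)}"
    using assms unfolding winning_inputs_def b_def c_def by (auto; metis (full_types))
  then show ?thesis by blast
qed

lemma win_prob_le_antipodal_sum:
  assumes nonneg: "\<forall>x a b c. 0 \<le> P x a b c" and "\<forall>a. f a < d"
    and "f False \<noteq> f True" "g False \<noteq> g True" "h False \<noteq> h True"
  shows "\<exists>b c. win_prob d P f g h \<le> P (f False) False b c + P (f True) True (\<not> b) (\<not> c)"
proof -
  obtain b c where sub: "winning_inputs f g h \<subseteq> {(False, b, c), (True, \<not> b, \<not> c)}"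
    using winning_inputs_subset_antipodal assms(3-5) by blast
  have "win_prob d P f g h = (\<Sum>(a, b, c)\<in>winning_inputs f g h. P (f a) a b c)"
    using assms(2) by (rule win_prob_eq_sum_winning_inputs)
  also have "\<dots> \<le> (\<Sum>(a, b, c)\<in>{(False, b, c), (True, \<not> b, \<not> c)}. P (f a) a b c)"
    using sub nonneg by (intro sum_mono2) auto
  also have "\<dots> = P (f False) False b c + P (f True) True (\<not> b) (\<not> c)"
    by simp
  finally show ?thesis by blast
qed

lemma win_prob_antipodal_strategy:
  assumes "s < d" "t < d" "s \<noteq> t"
  shows "win_prob d P (\<lambda>x. if x = a then s else t) (\<lambda>y. if y = b then s else t)
      (\<lambda>z. if z = c then s else t) = P s a b c + P t (\<not> a) (\<not> b) (\<not> c)"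
proof -
  have "winning_inputs (\<lambda>x. if x = a then s else t) (\<lambda>y. if y = b then s else t)
      (\<lambda>z. if z = c then s else t) = {(a, b, c), (\<not> a, \<not> b, \<not> c)}"
    using assms(3) unfolding winning_inputs_def by (auto split: if_splits)
  then show ?thesis
    using assms by (simp add: win_prob_eq_sum_winning_inputs)
qed

lemma win_prob_constant_strategy:
  assumes "s < d"
  shows "win_prob d P (\<lambda>_. s) (\<lambda>_. s) (\<lambda>_. s) = marg_X P s"
proof -
  have "winning_inputs (\<lambda>_. s) (\<lambda>_. s) (\<lambda>_. s) = UNIV"
    unfolding winning_inputs_def by auto
  then show ?thesis
    using assms by (simp add: win_prob_eq_sum_winning_inputs marg_X_eq_sum)
qed

definition candidates :: "(nat \<Rightarrow> bool \<Rightarrow> bool \<Rightarrow> bool \<Rightarrow> real) \<Rightarrow> nat \<Rightarrow> nat \<Rightarrow> real set" where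
  "candidates P s t = {marg_X P s,
     P s False False False + P t True True True,
     P s True False False + P t False True True,
     P s False True False + P t True False True,
     P s False False True + P t True True False}"

lemma finite_candidates: "finite (candidates P s t)"
  by (simp add: candidates_def)

lemma Max_candidates_mem: "Max (candidates P s t) \<in> candidates P s t"
  by (intro Max_in finite_candidates) (simp add: candidates_def)

lemma marg_X_le_Max_candidates: "marg_X P s \<le> Max (candidates P s t)"
  by (intro Max_ge finite_candidates) (simp add: candidates_def)

lemma antipodal_sum_le_Max_candidates:
  assumes "s < d" "t < d" "s \<noteq> t"
  shows "\<exists>s' t'. s' < d \<and> t' < d \<and> s' \<noteq> t' \<and>
    P s False b c + P t True (\<not> b) (\<not> c) \<le> Max (candidates P s' t')"
proof -
  let ?v = "P s False b c + P t True (\<not> b) (\<not> c)"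
  \<comment> \<open>for \<open>b = c = True\<close> the sum is listed only after exchanging \<open>s\<close> and \<open>t\<close>\<close>
  have "?v \<in> candidates P s t \<union> candidates P t s"
    by (cases b; cases c) (simp_all add: candidates_def add.commute)
  then show ?thesis
  proof
    assume "?v \<in> candidates P s t"
    then have "?v \<le> Max (candidates P s t)"
      by (rule Max_ge[OF finite_candidates])
    with assms show ?thesis
      by (intro exI[of _ s] exI[of _ t]) simp
  next
    assume "?v \<in> candidates P t s"
    then have "?v \<le> Max (candidates P t s)"
      by (rule Max_ge[OF finite_candidates])
    with assms show ?thesis
      by (intro exI[of _ t] exI[of _ s]) simp
  qed
qed

lemma candidates_cases:
  assumes "v \<in> candidates P s t"
  obtains "v = marg_X P s" | a b c where "v = P s a b c + P t (\<not> a) (\<not> b) (\<not> c)"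
  using assms that(2)[of False False False] that(2)[of True False False]
    that(2)[of False True False] that(2)[of False False True] that(1)
  unfolding candidates_def by auto

lemma finite_strat_funs: "finite (strat_funs d)"
proof -
  have "strat_funs d = (\<Pi>\<^sub>E a\<in>UNIV. {..<d})"
    by (auto simp: strat_funs_def PiE_UNIV_domain)
  then show ?thesis by (simp add: finite_PiE)
qed

lemma finite_win_probs:
  "finite {win_prob d P f g h | f g h. f \<in> strat_funs d \<and> g \<in> strat_funs d \<and> h \<in> strat_funs d}"
proof -
  have "{win_prob d P f g h | f g h. f \<in> strat_funs d \<and> g \<in> strat_funs d \<and> h \<in> strat_funs d} =
      (\<lambda>(f, g, h). win_prob d P f g h) ` (strat_funs d \<times> strat_funs d \<times> strat_funs d)"
    by (auto intro!: image_eqI[where x = "(f, g, h)" for f g h])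
  then show ?thesis
    by (simp add: finite_strat_funs)
qed

lemma win_prob_le_Max_candidates:
  assumes "d \<ge> 2" and nonneg: "\<forall>x a b c. 0 \<le> P x a b c"
    and "f \<in> strat_funs d" "g \<in> strat_funs d" "h \<in> strat_funs d"
  shows "\<exists>s t. s < d \<and> t < d \<and> s \<noteq> t \<and> win_prob d P f g h \<le> Max (candidates P s t)"
proof (cases "f False = f True \<or> g False = g True \<or> h False = h True")
  case True
  then obtain s where "s \<in> {f False, g False, h False}"
    and wins_at_s: "\<forall>(a, b, c)\<in>winning_inputs f g h. f a = s"
    using winning_inputs_single_value by blast
  then have "s < d"
    using assms(3-5) by (auto simp: strat_funs_def)
  define t :: nat where "t = (if s = 0 then 1 else 0)"
  have "t < d" "s \<noteq> t"
    using \<open>d \<ge> 2\<close> by (auto simp: t_def)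
  have "win_prob d P f g h \<le> marg_X P s"
    using nonneg assms(3) wins_at_s by (intro win_prob_le_marg_X) (auto simp: strat_funs_def)
  also have "\<dots> \<le> Max (candidates P s t)"
    by (rule marg_X_le_Max_candidates)
  finally show ?thesis using \<open>s < d\<close> \<open>t < d\<close> \<open>s \<noteq> t\<close> by blast
next
  case False
  have f_range: "\<forall>a. f a < d"
    using assms(3) by (simp add: strat_funs_def)
  obtain b c where
    bound: "win_prob d P f g h \<le> P (f False) False b c + P (f True) True (\<not> b) (\<not> c)"
    using win_prob_le_antipodal_sum[OF nonneg f_range] False by blast
  have "f False < d" "f True < d" "f False \<noteq> f True"
    using f_range False by simp_all
  from antipodal_sum_le_Max_candidates[OF this] obtain s t where "s < d" "t < d" "s \<noteq> t"
    "P (f False) False b c + P (f True) True (\<not> b) (\<not> c) \<le> Max (candidates P s t)"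
    by blast
  with bound show ?thesis
    by (intro exI[of _ s] exI[of _ t]) simp
qed

lemma candidate_achievable:
  assumes "s < d" "t < d" "s \<noteq> t" and "v \<in> candidates P s t"
  shows "\<exists>f g h. v = win_prob d P f g h \<and> f \<in> strat_funs d \<and> g \<in> strat_funs d \<and> h \<in> strat_funs d"
  using assms(4)
proof (cases rule: candidates_cases)
  case 1
  have "(\<lambda>_. s) \<in> strat_funs d"
    using assms(1) by (simp add: strat_funs_def)
  with 1 show ?thesis
    using win_prob_constant_strategy[OF assms(1), of P] by (intro exI[of _ "\<lambda>_. s"]) simp
next
  case (2 a b c)
  have "(\<lambda>x. if x = a' then s else t) \<in> strat_funs d" for a'
    using assms(1,2) by (simp add: strat_funs_def)
  with 2 show ?thesis
    using win_prob_antipodal_strategy[OF assms(1-3), of P a b c]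
    by (intro exI[of _ "\<lambda>x. if x = a then s else t"] exI[of _ "\<lambda>y. if y = b then s else t"]
        exI[of _ "\<lambda>z. if z = c then s else t"]) simp
qed

theorem mainTheorem8:
  fixes d :: nat and P :: "nat \<Rightarrow> bool \<Rightarrow> bool \<Rightarrow> bool \<Rightarrow> real"
  assumes "d \<ge> 2" and "is_distr d P"
  shows "omega_c d P =
    Max {Max {marg_X P s,
              P s False False False + P t True True True,
              P s True False False + P t False True True,
              P s False True False + P t True False True,
              P s False False True + P t True True False} | s t.
         s < d \<and> t < d \<and> s \<noteq> t}"
proof -
  let ?W = "{win_prob d P f g h | f g h. f \<in> strat_funs d \<and> g \<in> strat_funs d \<and> h \<in> strat_funs d}"
  let ?C = "{Max (candidates P s t) | s t. s < d \<and> t < d \<and> s \<noteq> t}"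
  have nonneg: "\<forall>x a b c. 0 \<le> P x a b c"
    using assms(2) by (simp add: is_distr_def)
  have "Max ?W = Max ?C"
  proof (rule Max_eq_if_dominated_both_ways)
    show "finite ?W"
      by (rule finite_win_probs)
    show "finite ?C"
      by (rule finite_subset[of _ "(\<lambda>(s, t). Max (candidates P s t)) ` ({..<d} \<times> {..<d})"]) auto
    have "(\<lambda>_. 0) \<in> strat_funs d" "Max (candidates P 0 1) \<in> ?C"
      using assms(1) by (force simp: strat_funs_def)+
    then show "?W \<noteq> {}" "?C \<noteq> {}"
      by blast+
    show "\<forall>w\<in>?W. \<exists>m\<in>?C. w \<le> m"
      using win_prob_le_Max_candidates[OF assms(1) nonneg] by blast
    show "\<forall>m\<in>?C. \<exists>w\<in>?W. m \<le> w"
    proof clarify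
      fix s t assume "s < d" "t < d" "s \<noteq> t"
      from candidate_achievable[OF this Max_candidates_mem]
      show "\<exists>w\<in>?W. Max (candidates P s t) \<le> w"
        by fastforce
    qed
  qed
  then show ?thesis
    unfolding omega_c_def candidates_def .
qed

end
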